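(* Let $f:\mathbb{R}^n\times\mathbb{R}^m\to\mathbb{R}$ and $g:\mathbb{R}^n\times\mathbb{R}^m\to\mathbb{R}^p$ be continuous. Assume that for every $x\in\mathbb{R}^n$, $f(x,\cdot)$ is strictly convex, $g(x,\cdot)$ is convex (componentwise), and the problem $\min_{u\in\mathbb{R}^m} f(x,u)$ subject to $g(x,u)\le 0$ has at least one minimizer; let $u^*(x)$ denote the (unique) minimizer. Then, for $x_0\in\mathbb{R}^n$, $u^*$ is locally bounded at $x_0$ if and only if local compact feasibility holds at $x_0$.
   Context: Local compact feasibility (LCF) holds at $x\in\mathbb{R}^n$ if there exist a compact set $K\subset\mathbb{R}^m$ and $\delta>0$ such that for all $y\in\mathbb{R}^n$ with $\|y-x\|<\delta$ there exists $u\in K$ with $g(y,u)\le 0$. A function $\varphi:\mathbb{R}^n\to\mathbb{R}^q$ is locally bounded at $x_0$ if there are a neighborhood $\breve{\mathcal{U}}$ of $x_0$ and $B>0$ with $\|\varphi(x)\|\le B$ for all $x\in\breve{\mathcal{U}}$. *)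

theory Defs
  imports "HOL-Analysis.Analysis"
begin

definition strictly_convex_on :: "'a::real_vector set \<Rightarrow> ('a \<Rightarrow> real) \<Rightarrow> bool" where
  "strictly_convex_on S h \<longleftrightarrow> convex S \<and>
     (\<forall>x\<in>S. \<forall>y\<in>S. \<forall>t::real. x \<noteq> y \<and> 0 < t \<and> t < 1 \<longrightarrow>
        h ((1 - t) *\<^sub>R x + t *\<^sub>R y) < (1 - t) * h x + t * h y)"

definition feasible :: "('n \<Rightarrow> 'm \<Rightarrow> real^'p) \<Rightarrow> 'n \<Rightarrow> 'm \<Rightarrow> bool" where
  "feasible g x u \<longleftrightarrow> (\<forall>i. g x u $ i \<le> 0)"

definition is_minimizer :: "('n \<Rightarrow> 'm \<Rightarrow> real) \<Rightarrow> ('n \<Rightarrow> 'm \<Rightarrow> real^'p) \<Rightarrow> 'n \<Rightarrow> 'm \<Rightarrow> bool" where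
  "is_minimizer f g x u \<longleftrightarrow> feasible g x u \<and> (\<forall>v. feasible g x v \<longrightarrow> f x u \<le> f x v)"

definition ustar :: "('n \<Rightarrow> 'm \<Rightarrow> real) \<Rightarrow> ('n \<Rightarrow> 'm \<Rightarrow> real^'p) \<Rightarrow> 'n \<Rightarrow> 'm" where
  "ustar f g x = (THE u. is_minimizer f g x u)"

definition LCF :: "('n::metric_space \<Rightarrow> 'm::metric_space \<Rightarrow> real^'p) \<Rightarrow> 'n \<Rightarrow> bool" where
  "LCF g x \<longleftrightarrow> (\<exists>K \<delta>. compact K \<and> \<delta> > 0 \<and>
      (\<forall>y. dist y x < \<delta> \<longrightarrow> (\<exists>u\<in>K. feasible g y u)))"

definition locally_bounded_at :: "('a::topological_space \<Rightarrow> 'b::real_normed_vector) \<Rightarrow> 'a \<Rightarrow> bool" where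
  "locally_bounded_at \<phi> x0 \<longleftrightarrow> (\<exists>U B. open U \<and> x0 \<in> U \<and> B > 0 \<and> (\<forall>x\<in>U. norm (\<phi> x) \<le> B))"

end

theory Submission
  imports Defs
begin

(* A minimizer is feasible, so local boundedness of u* yields LCF with a closed ball as K.
   Conversely, suppose u*(x_k) is unbounded along x_k -> x0 while feasible points v_k stay in
   the compact K. The unit directions from v_k to u*(x_k) accumulate at some unit vector d, with
   v_k -> v along the same subsequence. By convexity every point of the segment
   [v_k, u*(x_k)] is feasible for x_k and no worse than v_k, so in the limit the whole ray
   v + R d is feasible for x0 and f(x0, .) stays below f(x0, v) on it. A convex continuous
   function bounded above on one ray does not increase along that direction from any point,
   so u*(x0) + d is again a minimizer, and uniqueness under strict convexity forces d = 0. *)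

lemma strictly_convex_on_imp_convex_on:
  assumes "strictly_convex_on S h"
  shows "convex_on S h"
proof
  show "convex S"
    using assms by (simp add: strictly_convex_on_def)
  fix t :: real and x y assume t: "0 < t" "t < 1" and xy: "x \<in> S" "y \<in> S"
  show "h ((1 - t) *\<^sub>R x + t *\<^sub>R y) \<le> (1 - t) * h x + t * h y"
  proof (cases "x = y")
    case True
    then show ?thesis
      by (simp add: algebra_simps flip: scaleR_add_left)
  next
    case False
    then show ?thesis
      using assms t xy by (auto simp: strictly_convex_on_def intro: less_imp_le)
  qed
qed

lemma convex_on_ray_bounded_imp_nonincreasing:
  fixes h :: "'a::real_normed_vector \<Rightarrow> real"
  assumes conv: "convex_on UNIV h" and cont: "continuous_on UNIV h"
    and bounded: "\<And>R. R \<ge> 0 \<Longrightarrow> h (a + R *\<^sub>R d) \<le> c"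
    and "R \<ge> 0"
  shows "h (b + R *\<^sub>R d) \<le> h b"
proof -
  \<comment> \<open>\<open>b + R d\<close> is the limit, as \<open>t \<rightarrow> 0+\<close>, of the point at parameter \<open>t\<close> on the chord from \<open>b\<close> to \<open>a + (R/t) d\<close>.\<close>
  have chord: "h ((1 - t) *\<^sub>R b + t *\<^sub>R a + R *\<^sub>R d) \<le> (1 - t) * h b + t * c"
    if t: "0 < t" "t < 1" for t
  proof -
    have "(1 - t) *\<^sub>R b + t *\<^sub>R a + R *\<^sub>R d = (1 - t) *\<^sub>R b + t *\<^sub>R (a + (R / t) *\<^sub>R d)"
      using t by (simp add: algebra_simps)
    also have "h \<dots> \<le> (1 - t) * h b + t * h (a + (R / t) *\<^sub>R d)"
      using t by (intro convex_onD[OF conv]) auto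
    also have "\<dots> \<le> (1 - t) * h b + t * c"
      using bounded[of "R / t"] t \<open>R \<ge> 0\<close> by (intro add_left_mono mult_left_mono) auto
    finally show ?thesis .
  qed
  have "((\<lambda>t. h ((1 - t) *\<^sub>R b + t *\<^sub>R a + R *\<^sub>R d)) \<longlongrightarrow> h ((1 - 0) *\<^sub>R b + 0 *\<^sub>R a + R *\<^sub>R d))
      (at_right 0)"
    by (intro continuous_on_tendsto_compose[OF cont] tendsto_intros) auto
  moreover have "((\<lambda>t. (1 - t) * h b + t * c) \<longlongrightarrow> (1 - 0) * h b + 0 * c) (at_right 0)"
    by (intro tendsto_intros)
  moreover have "\<forall>\<^sub>F t in at_right 0. h ((1 - t) *\<^sub>R b + t *\<^sub>R a + R *\<^sub>R d) \<le> (1 - t) * h b + t * c"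
    unfolding eventually_at_right_field by (auto intro!: exI[of _ 1] chord)
  ultimately show ?thesis
    using tendsto_le[OF trivial_limit_at_right_real] by fastforce
qed

lemma feasible_convex_combination:
  assumes g_conv: "\<And>i. convex_on UNIV (\<lambda>u. g x u $ i)"
    and "feasible g x u" "feasible g x v" "0 \<le> t" "t \<le> (1::real)"
  shows "feasible g x ((1 - t) *\<^sub>R u + t *\<^sub>R v)"
  unfolding feasible_def
proof
  fix i
  have "g x ((1 - t) *\<^sub>R u + t *\<^sub>R v) $ i \<le> (1 - t) * g x u $ i + t * g x v $ i"
    using assms by (intro convex_onD[OF g_conv]) auto
  also have "\<dots> \<le> 0"
    using assms by (intro add_nonpos_nonpos mult_nonneg_nonpos) (auto simp: feasible_def)
  finally show "g x ((1 - t) *\<^sub>R u + t *\<^sub>R v) $ i \<le> 0" .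
qed

lemma is_minimizer_unique:
  assumes f_sconv: "strictly_convex_on UNIV (f x)"
    and g_conv: "\<And>i. convex_on UNIV (\<lambda>u. g x u $ i)"
    and u: "is_minimizer f g x u" and v: "is_minimizer f g x v"
  shows "u = v"
proof (rule ccontr)
  assume "u \<noteq> v"
  define m where "m = (1 - 1/2) *\<^sub>R u + (1/2::real) *\<^sub>R v"
  have "feasible g x m"
    unfolding m_def using u v by (intro feasible_convex_combination[of g x, OF g_conv]) (auto simp: is_minimizer_def)
  then have "f x u \<le> f x m"
    using u by (simp add: is_minimizer_def)
  moreover have "f x m < (1 - 1/2) * f x u + (1/2) * f x v"
  proof -
    have "(0::real) < 1/2" "(1/2::real) < 1"
      by simp_all
    then show ?thesis
      using f_sconv \<open>u \<noteq> v\<close> unfolding m_def strictly_convex_on_def by (meson UNIV_I)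
  qed
  moreover have "f x u = f x v"
    using u v by (auto simp: is_minimizer_def intro: order.antisym)
  ultimately show False
    by simp
qed

lemma is_minimizer_ustar:
  assumes "strictly_convex_on UNIV (f x)"
    and "\<And>i. convex_on UNIV (\<lambda>u. g x u $ i)"
    and "\<exists>u. is_minimizer f g x u"
  shows "is_minimizer f g x (ustar f g x)"
  using assms is_minimizer_unique[of f x g] unfolding ustar_def by (metis theI)

lemma is_minimizer_segment:
  assumes f_conv: "convex_on UNIV (f x)"
    and g_conv: "\<And>i. convex_on UNIV (\<lambda>u. g x u $ i)"
    and u: "is_minimizer f g x u" and v: "feasible g x v" and t: "0 \<le> t" "t \<le> 1"
  shows "feasible g x ((1 - t) *\<^sub>R v + t *\<^sub>R u) \<and> f x ((1 - t) *\<^sub>R v + t *\<^sub>R u) \<le> f x v"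
proof
  show "feasible g x ((1 - t) *\<^sub>R v + t *\<^sub>R u)"
    using u v t by (intro feasible_convex_combination[of g x, OF g_conv]) (auto simp: is_minimizer_def)
  have "f x ((1 - t) *\<^sub>R v + t *\<^sub>R u) \<le> (1 - t) * f x v + t * f x u"
    using t by (intro convex_onD[OF f_conv]) auto
  also have "\<dots> \<le> (1 - t) * f x v + t * f x v"
    using u v t by (intro add_left_mono mult_left_mono) (auto simp: is_minimizer_def)
  finally show "f x ((1 - t) *\<^sub>R v + t *\<^sub>R u) \<le> f x v"
    by (simp add: algebra_simps)
qed

lemma tendsto_uncurry:
  assumes "continuous_on UNIV (\<lambda>(x, u). h x u)" "(X \<longlongrightarrow> a) F" "(W \<longlongrightarrow> w) F"
  shows "((\<lambda>k. h (X k) (W k)) \<longlongrightarrow> h a w) F"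
  using continuous_on_tendsto_compose[OF assms(1) tendsto_Pair[OF assms(2,3)]] by simp

lemma continuous_on_uncurry_slice:
  assumes "continuous_on UNIV (\<lambda>(x, u). h x u)"
  shows "continuous_on UNIV (h a)"
  using continuous_on_compose2[OF assms continuous_on_Pair[OF continuous_on_const continuous_on_id]]
  by simp

lemma recession_direction_of_minimizer_eq_0:
  fixes f :: "'a \<Rightarrow> 'b::real_normed_vector \<Rightarrow> real"
  assumes f_sconv: "strictly_convex_on UNIV (f x)"
    and g_conv: "\<And>i. convex_on UNIV (\<lambda>u. g x u $ i)"
    and f_cont: "continuous_on UNIV (f x)"
    and g_cont: "\<And>i. continuous_on UNIV (\<lambda>u. g x u $ i)"
    and u: "is_minimizer f g x u"
    and ray: "\<And>R. R \<ge> 0 \<Longrightarrow> f x (v + R *\<^sub>R d) \<le> f x v \<and> feasible g x (v + R *\<^sub>R d)"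
  shows "d = 0"
proof -
  have "f x (u + 1 *\<^sub>R d) \<le> f x u"
    by (rule convex_on_ray_bounded_imp_nonincreasing
        [OF strictly_convex_on_imp_convex_on[OF f_sconv] f_cont]) (use ray in auto)
  moreover have "g x (u + 1 *\<^sub>R d) $ i \<le> g x u $ i" for i
    by (rule convex_on_ray_bounded_imp_nonincreasing[OF g_conv g_cont, where c = 0])
      (use ray in \<open>auto simp: feasible_def\<close>)
  ultimately have "f x (u + d) \<le> f x u" "\<And>i. g x (u + d) $ i \<le> g x u $ i"
    by simp_all
  then have "is_minimizer f g x (u + d)"
    using u unfolding is_minimizer_def feasible_def by (meson order_trans)
  then have "u = u + d"
    by (rule is_minimizer_unique[OF f_sconv g_conv u])
  then show "d = 0"
    by simp
qed

lemma descent_ray_at_limit: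
  fixes f :: "'a::topological_space \<Rightarrow> 'b::real_normed_vector \<Rightarrow> real"
    and g :: "'a \<Rightarrow> 'b \<Rightarrow> real^'p"
  assumes f_cont: "continuous_on UNIV (\<lambda>(x, u). f x u)"
    and g_cont: "continuous_on UNIV (\<lambda>(x, u). g x u)"
    and f_conv: "\<And>x. convex_on UNIV (f x)"
    and g_conv: "\<And>x i. convex_on UNIV (\<lambda>u. g x u $ i)"
    and U: "\<And>k. is_minimizer f g (X k) (U k)"
    and V: "\<And>k. feasible g (X k) (V k)"
    and unbounded: "filterlim (\<lambda>k. norm (U k - V k)) at_top sequentially"
    and X: "X \<longlonglongrightarrow> x0" and v: "V \<longlonglongrightarrow> v" and d: "(\<lambda>k. sgn (U k - V k)) \<longlonglongrightarrow> d"
    and R: "R \<ge> 0"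
  shows "f x0 (v + R *\<^sub>R d) \<le> f x0 v \<and> feasible g x0 (v + R *\<^sub>R d)"
proof -
  define W where "W k = V k + R *\<^sub>R sgn (U k - V k)" for k
  have W: "W \<longlonglongrightarrow> v + R *\<^sub>R d"
    unfolding W_def by (intro tendsto_intros v d)
  have "\<forall>\<^sub>F k in sequentially. feasible g (X k) (W k) \<and> f (X k) (W k) \<le> f (X k) (V k)"
    using unbounded unfolding filterlim_at_top_dense
  proof (rule allE[of _ R], elim eventually_mono)
    fix k assume far: "R < norm (U k - V k)"
    define t where "t = R / norm (U k - V k)"
    have t: "0 \<le> t" "t \<le> 1"
      using R far by (auto simp: t_def divide_le_eq_1)
    have "W k = V k + t *\<^sub>R (U k - V k)"
      by (simp add: W_def t_def sgn_div_norm divide_inverse)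
    also have "\<dots> = (1 - t) *\<^sub>R V k + t *\<^sub>R U k"
      by (simp add: algebra_simps)
    finally have "W k = (1 - t) *\<^sub>R V k + t *\<^sub>R U k" .
    then show "feasible g (X k) (W k) \<and> f (X k) (W k) \<le> f (X k) (V k)"
      using is_minimizer_segment[OF f_conv g_conv U V t] by simp
  qed
  then have "f x0 (v + R *\<^sub>R d) \<le> f x0 v" and "g x0 (v + R *\<^sub>R d) $ i \<le> 0" for i
    by (auto intro!: tendsto_le[OF trivial_limit_sequentially] tendsto_uncurry[OF f_cont X]
        tendsto_vec_nth[OF tendsto_uncurry[OF g_cont X W]] v W elim: eventually_mono
        simp: feasible_def)
  then show ?thesis
    by (simp add: feasible_def)
qed

lemma not_locally_bounded_atE:
  fixes \<phi> :: "'a::metric_space \<Rightarrow> 'b::real_normed_vector"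
  assumes "\<not> locally_bounded_at \<phi> x0" "e > 0"
  obtains X where "X \<longlonglongrightarrow> x0" "\<And>k. dist (X k) x0 < e"
    "filterlim (\<lambda>k. norm (\<phi> (X k))) at_top sequentially"
proof -
  have "\<exists>x. dist x x0 < min e (inverse (Suc k)) \<and> real k < norm (\<phi> x)" for k
  proof (rule ccontr)
    assume none: "\<not> ?thesis"
    have "\<forall>x\<in>ball x0 (min e (inverse (Suc k))). norm (\<phi> x) \<le> real k + 1"
    proof
      fix x assume "x \<in> ball x0 (min e (inverse (Suc k)))"
      then have "dist x x0 < min e (inverse (Suc k))"
        by (simp add: dist_commute)
      with none have "\<not> real k < norm (\<phi> x)"
        by blast
      then show "norm (\<phi> x) \<le> real k + 1"
        by simp
    qed
    then have "locally_bounded_at \<phi> x0"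
      unfolding locally_bounded_at_def using \<open>e > 0\<close>
      by (intro exI[of _ "ball x0 (min e (inverse (Suc k)))"] exI[of _ "real k + 1"]) auto
    with assms show False
      by simp
  qed
  then obtain X where X: "\<And>k. dist (X k) x0 < min e (inverse (Suc k))" "\<And>k. real k < norm (\<phi> (X k))"
    by metis
  have "\<forall>k. norm (dist (X k) x0) \<le> inverse (Suc k)"
    using X(1) by (simp add: less_imp_le)
  then have "(\<lambda>k. dist (X k) x0) \<longlonglongrightarrow> 0"
    by (rule Lim_null_comparison[OF always_eventually LIMSEQ_inverse_real_of_nat])
  then have "X \<longlonglongrightarrow> x0"
    by (rule tendsto_dist_iff[THEN iffD2])
  moreover have "filterlim (\<lambda>k. norm (\<phi> (X k))) at_top sequentially"
    using X(2) by (intro filterlim_at_top_mono[OF filterlim_real_sequentially] always_eventually allI less_imp_le)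
  ultimately show thesis
    using that X(1) by simp
qed

lemma locally_bounded_at_feasible_imp_LCF:
  fixes \<phi> :: "'a::metric_space \<Rightarrow> 'b::euclidean_space"
  assumes "locally_bounded_at \<phi> x0" and feasible: "\<And>x. feasible g x (\<phi> x)"
  shows "LCF g x0"
proof -
  obtain U B where U: "open U" "x0 \<in> U" "\<forall>x\<in>U. norm (\<phi> x) \<le> B"
    using assms(1) unfolding locally_bounded_at_def by blast
  obtain e where "e > 0" "ball x0 e \<subseteq> U"
    using open_contains_ball U by blast
  then have "\<exists>u\<in>cball 0 B. feasible g y u" if "dist y x0 < e" for y
    using U(3) feasible[of y] that by (intro bexI[of _ "\<phi> y"]) (auto simp: dist_commute subset_iff)
  then show ?thesis
    unfolding LCF_def using \<open>e > 0\<close> by (intro exI[of _ "cball 0 B"] exI[of _ e]) auto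
qed

lemma filterlim_norm_diff_bounded_at_top:
  fixes U V :: "'a \<Rightarrow> 'b::real_normed_vector"
  assumes "filterlim (\<lambda>k. norm (U k)) at_top F" and "\<And>k. norm (V k) \<le> M"
  shows "filterlim (\<lambda>k. norm (U k - V k)) at_top F"
proof (rule filterlim_at_top_mono)
  show "filterlim (\<lambda>k. - M + norm (U k)) at_top F"
    by (rule filterlim_tendsto_add_at_top[OF tendsto_const assms(1)])
  show "\<forall>\<^sub>F k in F. - M + norm (U k) \<le> norm (U k - V k)"
  proof (intro always_eventually allI)
    fix k
    show "- M + norm (U k) \<le> norm (U k - V k)"
      using assms(2)[of k] norm_triangle_ineq2[of "U k" "V k"] by linarith
  qed
qed

lemma compact_subseq_limit_direction:
  fixes V :: "nat \<Rightarrow> 'a::heine_borel" and W :: "nat \<Rightarrow> 'b::euclidean_space"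
  assumes "compact K" "\<And>k. V k \<in> K" "filterlim (\<lambda>k. norm (W k)) at_top sequentially"
  obtains r v d where "strict_mono r" "(V \<circ> r) \<longlonglongrightarrow> v" "(\<lambda>k. sgn (W (r k))) \<longlonglongrightarrow> d" "norm d = 1"
proof -
  have "\<forall>k. (V k, sgn (W k)) \<in> K \<times> cball 0 1"
    using assms(2) by (simp add: norm_sgn)
  then obtain l r where r: "strict_mono r" and "l \<in> K \<times> cball 0 1"
    and lim: "((\<lambda>k. (V k, sgn (W k))) \<circ> r) \<longlonglongrightarrow> l"
    by (rule seq_compactE[OF compact_imp_seq_compact[OF compact_Times[OF assms(1) compact_cball]]])
  obtain v d where "l = (v, d)"
    by fastforce
  with lim have Vr: "(V \<circ> r) \<longlonglongrightarrow> v" and dr: "(\<lambda>k. sgn (W (r k))) \<longlonglongrightarrow> d"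
    using tendsto_fst tendsto_snd by (fastforce simp: o_def)+
  have "filterlim (\<lambda>k. norm (W (r k))) at_top sequentially"
    using filterlim_compose[OF assms(3) filterlim_subseq[OF r]] by simp
  then have "\<forall>\<^sub>F k in sequentially. norm (sgn (W (r k))) = 1"
    unfolding filterlim_at_top_dense by (auto simp: norm_sgn elim: allE[of _ 0] eventually_mono)
  then have "(\<lambda>k. norm (sgn (W (r k)))) \<longlonglongrightarrow> 1"
    by (rule tendsto_eventually)
  with tendsto_norm[OF dr] have "norm d = 1"
    using LIMSEQ_unique by blast
  with r Vr dr show thesis
    using that by blast
qed

lemma LCF_imp_locally_bounded_at_ustar:
  fixes f :: "'a::metric_space \<Rightarrow> 'b::euclidean_space \<Rightarrow> real"
    and g :: "'a \<Rightarrow> 'b \<Rightarrow> real^'p"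
  assumes f_cont: "continuous_on UNIV (\<lambda>(x, u). f x u)"
    and g_cont: "continuous_on UNIV (\<lambda>(x, u). g x u)"
    and f_sconv: "\<And>x. strictly_convex_on UNIV (f x)"
    and g_conv: "\<And>x i. convex_on UNIV (\<lambda>u. g x u $ i)"
    and ustar: "\<And>x. is_minimizer f g x (ustar f g x)"
    and "LCF g x0"
  shows "locally_bounded_at (ustar f g) x0"
proof (rule ccontr)
  assume not_bounded: "\<not> ?thesis"
  obtain K \<delta> where K: "compact K" "\<delta> > 0" "\<And>y. dist y x0 < \<delta> \<Longrightarrow> \<exists>u\<in>K. feasible g y u"
    using \<open>LCF g x0\<close> unfolding LCF_def by blast
  obtain X where X: "X \<longlonglongrightarrow> x0" "\<And>k. dist (X k) x0 < \<delta>"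
    and unbounded_ustar: "filterlim (\<lambda>k. norm (ustar f g (X k))) at_top sequentially"
    using not_locally_bounded_atE[OF not_bounded \<open>\<delta> > 0\<close>] by blast
  obtain V where V: "\<And>k. V k \<in> K" "\<And>k. feasible g (X k) (V k)"
    using K(3)[OF X(2)] by metis
  define U where "U k = ustar f g (X k)" for k
  obtain M where "\<And>u. u \<in> K \<Longrightarrow> norm u \<le> M"
    using compact_imp_bounded[OF K(1)] by (auto simp: bounded_iff)
  then have unbounded: "filterlim (\<lambda>k. norm (U k - V k)) at_top sequentially"
    using unbounded_ustar V(1) unfolding U_def by (intro filterlim_norm_diff_bounded_at_top) auto
  obtain r v d where r: "strict_mono r" and Vr: "(V \<circ> r) \<longlonglongrightarrow> v"
    and dr: "(\<lambda>k. sgn (U (r k) - V (r k))) \<longlonglongrightarrow> d" and "norm d = 1"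
    by (rule compact_subseq_limit_direction[where W = "\<lambda>k. U k - V k", OF K(1) V(1) unbounded])
  have "d = 0"
  proof (rule recession_direction_of_minimizer_eq_0[OF f_sconv g_conv
        continuous_on_uncurry_slice[OF f_cont] _ ustar])
    show "continuous_on UNIV (\<lambda>u. g x0 u $ i)" for i
      using continuous_on_uncurry_slice[OF g_cont, of x0] by (intro continuous_intros)
    show "f x0 (v + R *\<^sub>R d) \<le> f x0 v \<and> feasible g x0 (v + R *\<^sub>R d)" if "R \<ge> 0" for R
    proof (rule descent_ray_at_limit[where X = "X \<circ> r" and U = "U \<circ> r" and V = "V \<circ> r",
          OF f_cont g_cont strictly_convex_on_imp_convex_on[OF f_sconv] g_conv])
      show "is_minimizer f g ((X \<circ> r) k) ((U \<circ> r) k)" for k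
        by (simp add: U_def ustar)
      show "feasible g ((X \<circ> r) k) ((V \<circ> r) k)" for k
        by (simp add: V(2))
      show "(X \<circ> r) \<longlonglongrightarrow> x0"
        by (rule LIMSEQ_subseq_LIMSEQ[OF X(1) r])
      show "filterlim (\<lambda>k. norm ((U \<circ> r) k - (V \<circ> r) k)) at_top sequentially"
        using filterlim_compose[OF unbounded filterlim_subseq[OF r]] by (simp add: o_def)
    qed (use Vr dr \<open>R \<ge> 0\<close> in \<open>simp_all add: o_def\<close>)
  qed
  with \<open>norm d = 1\<close> show False
    by simp
qed

theorem proposition3p7:
  fixes f :: "real^'n \<Rightarrow> real^'m \<Rightarrow> real"
    and g :: "real^'n \<Rightarrow> real^'m \<Rightarrow> real^'p"
    and x0 :: "real^'n"
  assumes f_cont: "continuous_on UNIV (\<lambda>(x, u). f x u)"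
    and g_cont: "continuous_on UNIV (\<lambda>(x, u). g x u)"
    and f_sconv: "\<And>x. strictly_convex_on UNIV (f x)"
    and g_conv: "\<And>x i. convex_on UNIV (\<lambda>u. g x u $ i)"
    and ex_min: "\<And>x. \<exists>u. is_minimizer f g x u"
  shows "locally_bounded_at (ustar f g) x0 \<longleftrightarrow> LCF g x0"
proof -
  have ustar: "is_minimizer f g x (ustar f g x)" for x
    using is_minimizer_ustar[OF f_sconv g_conv ex_min] .
  show ?thesis
  proof
    show "LCF g x0" if "locally_bounded_at (ustar f g) x0"
      using ustar unfolding is_minimizer_def by (blast intro: locally_bounded_at_feasible_imp_LCF[OF that])
    show "locally_bounded_at (ustar f g) x0" if "LCF g x0"
      using LCF_imp_locally_bounded_at_ustar[OF f_cont g_cont f_sconv g_conv ustar that] .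
  qed
qed

end
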